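(* Let $w\in\mathcal L_n$. If $q'$ and $q$ are valid steps for $w$ in $\mathcal L$ with $q'<q$, then $\gcd(q,q')$ is also a valid step for $w$ in $\mathcal L$. In particular the minimal valid step of $w$ divides every valid step of $w$.
   Context: $\mathcal L$ is a language over a finite alphabet $\mathcal A$ (nonempty finite words, containing $\mathcal A$, closed under subwords, every word extendable on both sides), $\mathcal L_n$ its words of length $n$. For $n\ge2$, $w\in\mathcal A^n$ and an integer $1\le q\le n/2$ with $w_{[q+1,n]}=w_{[1,n-q]}$, $w^{q\ast r}$ is the word of length $n+(r-1)q$ with $(w^{q\ast r})_{[q(i-1)+1,q(i-1)+n]}=w$ for $1\le i\le r$; $q$ is a valid step for $w$ in $\mathcal L$ if moreover $w^{q\ast2}\in\mathcal L$. The minimal step of $w$ is the least valid step. *)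

theory Defs
  imports Main
begin

definition is_language :: "'a set \<Rightarrow> 'a list set \<Rightarrow> bool" where
  "is_language A L \<longleftrightarrow> finite A \<and>
     (\<forall>w\<in>L. w \<noteq> [] \<and> set w \<subseteq> A) \<and>
     (\<forall>a\<in>A. [a] \<in> L) \<and>
     (\<forall>u x v. u @ x @ v \<in> L \<and> x \<noteq> [] \<longrightarrow> x \<in> L) \<and>
     (\<forall>w\<in>L. \<exists>a\<in>A. \<exists>b\<in>A. a # w @ [b] \<in> L)"

text \<open>w^{q*r}: the word of length n+(r-1)q whose factor at positions
  [q(i-1)+1, q(i-1)+n] is w for 1 \<le> i \<le> r (0-based: drop (q(i-1)), take n).\<close>
definition qstar :: "'a list \<Rightarrow> nat \<Rightarrow> nat \<Rightarrow> 'a list" where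
  "qstar w q r = (THE u. length u = length w + (r - 1) * q \<and>
      (\<forall>i\<in>{1..r}. take (length w) (drop (q * (i - 1)) u) = w))"

definition valid_step :: "'a list set \<Rightarrow> 'a list \<Rightarrow> nat \<Rightarrow> bool" where
  "valid_step L w q \<longleftrightarrow> length w \<ge> 2 \<and> 1 \<le> q \<and> 2 * q \<le> length w \<and>
     drop q w = take (length w - q) w \<and> qstar w q 2 \<in> L"

definition min_step :: "'a list set \<Rightarrow> 'a list \<Rightarrow> nat" where
  "min_step L w = (LEAST q. valid_step L w q)"

end

theory Submission
  imports Defs
begin

text \<open>The overlap condition on \<open>w\<close> says that \<open>q\<close> is a period of \<open>w\<close>, and for
  \<open>q \<le> |w|\<close> the word \<open>w\<^sup>q\<^sup>*\<^sup>2\<close> is \<open>w\<close> followed by its last \<open>q\<close> letters.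
  Two valid steps \<open>q' < q\<close> satisfy \<open>q + q' \<le> |w|\<close>, so by the weak Fine--Wilf
  theorem \<open>d = gcd q q'\<close> is again a period. Since \<open>d\<close> divides \<open>q\<close>, the last \<open>d\<close>
  letters of \<open>w\<close> are the first \<open>d\<close> letters of its last \<open>q\<close>, so \<open>w\<^sup>d\<^sup>*\<^sup>2\<close> is a
  prefix of \<open>w\<^sup>q\<^sup>*\<^sup>2 \<in> L\<close> and lies in \<open>L\<close> by factor closure. Minimality then forces
  the least valid step to equal its gcd with any other valid step.\<close>

definition has_period :: "'a list \<Rightarrow> nat \<Rightarrow> bool" where
  "has_period w p \<longleftrightarrow> (\<forall>i. i + p < length w \<longrightarrow> w ! i = w ! (i + p))"

lemma drop_eq_take_iff_has_period:
  assumes "p \<le> length w"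
  shows "drop p w = take (length w - p) w \<longleftrightarrow> has_period w p"
proof
  assume shift: "drop p w = take (length w - p) w"
  show "has_period w p" unfolding has_period_def
  proof (intro allI impI)
    fix i assume i: "i + p < length w"
    then have "drop p w ! i = take (length w - p) w ! i" using shift by simp
    then show "w ! i = w ! (i + p)" using i by (simp add: add.commute)
  qed
next
  assume "has_period w p"
  then show "drop p w = take (length w - p) w"
    by (intro nth_equalityI) (auto simp: has_period_def add.commute)
qed

lemma has_period_mult:
  assumes "has_period w p"
  shows "has_period w (k * p)"
  unfolding has_period_def
proof (induction k)
  case (Suc k)
  show ?case
  proof (intro allI impI)
    fix i assume i: "i + Suc k * p < length w"
    then have "w ! i = w ! (i + k * p)" using Suc.IH by simp
    also have "\<dots> = w ! (i + k * p + p)" using assms i unfolding has_period_def by simp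
    finally show "w ! i = w ! (i + Suc k * p)" by (simp add: ac_simps)
  qed
qed simp

lemma has_period_dvd: "has_period w d \<Longrightarrow> d dvd p \<Longrightarrow> has_period w p"
  by (metis dvd_def has_period_mult mult.commute)

text \<open>The step of Euclid's algorithm: an index \<open>i\<close> is shifted by \<open>q - p\<close>
  either as \<open>+q\<close> then \<open>-p\<close>, or as \<open>-p\<close> then \<open>+q\<close>; \<open>p + q \<le> |w|\<close> guarantees
  that one of the two routes stays inside \<open>w\<close>.\<close>
lemma has_period_diff:
  assumes p: "has_period w p" and q: "has_period w q"
    and "p < q" and "p + q \<le> length w"
  shows "has_period w (q - p)"
  unfolding has_period_def
proof (intro allI impI)
  fix i assume i: "i + (q - p) < length w"
  show "w ! i = w ! (i + (q - p))"
  proof (cases "i + q < length w")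
    case True
    then have "w ! i = w ! (i + q)" using q unfolding has_period_def by blast
    also have "\<dots> = w ! (i + (q - p) + p)" using \<open>p < q\<close> by simp
    also have "\<dots> = w ! (i + (q - p))"
      using p True \<open>p < q\<close> unfolding has_period_def
      by (simp add: less_imp_le del: add_diff_assoc)
    finally show ?thesis .
  next
    case False
    then have "p \<le> i" using assms(3,4) i by linarith
    have "w ! (i - p) = w ! (i - p + p)"
      using p i \<open>p \<le> i\<close> \<open>p < q\<close> unfolding has_period_def by simp
    then have "w ! i = w ! (i - p)" using \<open>p \<le> i\<close> by simp
    also have "\<dots> = w ! (i - p + q)" using q i \<open>p \<le> i\<close> \<open>p < q\<close> unfolding has_period_def by simp
    also have "i - p + q = i + (q - p)" using \<open>p \<le> i\<close> \<open>p < q\<close> by simp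
    finally show ?thesis .
  qed
qed

lemma fine_wilf_gcd:
  "has_period w p \<Longrightarrow> has_period w q \<Longrightarrow> p + q \<le> length w \<Longrightarrow> has_period w (gcd p q)"
proof (induction "p + q" arbitrary: p q rule: less_induct)
  case less
  consider "p = 0 \<or> q = 0 \<or> p = q" | "0 < p" "p < q" | "0 < q" "q < p" by linarith
  then show ?case
  proof cases
    case 1
    then show ?thesis using less.prems by auto
  next
    case 2
    then have "has_period w (gcd (q - p) p)"
      using less has_period_diff[of w p q] by simp
    then show ?thesis using 2 gcd_diff1_nat[of p q] by (simp add: gcd.commute)
  next
    case 3
    then have "has_period w (gcd (p - q) q)"
      using less has_period_diff[of w q p] by simp
    then show ?thesis using 3 gcd_diff1_nat[of q p] by simp
  qed
qed

lemma qstar_2: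
  assumes "q \<le> length w" and "drop q w = take (length w - q) w"
  shows "qstar w q 2 = w @ drop (length w - q) w"
  unfolding qstar_def
proof (rule the_equality)
  let ?u = "w @ drop (length w - q) w"
  have "drop q ?u = take (length w - q) w @ drop (length w - q) w" using assms by simp
  then have "take (length w) (drop q ?u) = w" by simp
  moreover have "{1..2::nat} = {1, 2}" by auto
  ultimately show "length ?u = length w + (2 - 1) * q \<and>
      (\<forall>i\<in>{1..2}. take (length w) (drop (q * (i - 1)) ?u) = w)" using assms by simp
next
  fix u assume "length u = length w + (2 - 1) * q \<and>
      (\<forall>i\<in>{1..2::nat}. take (length w) (drop (q * (i - 1)) u) = w)"
  then have len: "length u = length w + q" and prefix: "take (length w) u = w"
    and shifted: "take (length w) (drop q u) = w" by (auto dest: bspec[of _ _ 1] bspec[of _ _ 2])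
  have "drop (length w) u = drop (length w - q) (drop q u)" using assms(1) len by simp
  also have "drop q u = w" using shifted len by simp
  finally show "u = w @ drop (length w - q) w" using prefix by (metis append_take_drop_id)
qed

lemma language_take_closed:
  assumes "is_language A L" and "u \<in> L" and "0 < k"
  shows "take k u \<in> L"
proof -
  have "u \<noteq> []" using assms(1,2) unfolding is_language_def by blast
  then have "take k u \<noteq> []" using \<open>0 < k\<close> by simp
  moreover have "[] @ take k u @ drop k u \<in> L" using assms(2) by simp
  ultimately show ?thesis using assms(1) unfolding is_language_def by blast
qed

lemma valid_step_has_period:
  assumes "valid_step L w q"
  shows "has_period w q"
proof -
  have "q \<le> length w" and "drop q w = take (length w - q) w"
    using assms unfolding valid_step_def by auto
  then show ?thesis using drop_eq_take_iff_has_period by blast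
qed

lemma valid_step_gcd:
  assumes L: "is_language A L"
    and valid': "valid_step L w q'" and valid: "valid_step L w q" and "q' < q"
  shows "valid_step L w (gcd q q')"
proof -
  define n d where "n = length w" and "d = gcd q q'"
  have "2 \<le> n" "0 < q'" "2 * q \<le> n" and shift_q: "drop q w = take (n - q) w"
    using valid valid' unfolding valid_step_def n_def by auto
  have "0 < d" "d \<le> q'" "d dvd q" using \<open>0 < q'\<close> by (simp_all add: d_def)
  have period_d: "has_period w d"
    using fine_wilf_gcd[OF valid_step_has_period[OF valid] valid_step_has_period[OF valid']]
      \<open>q' < q\<close> \<open>2 * q \<le> n\<close> by (simp add: d_def n_def)
  have shift_d: "drop d w = take (n - d) w"
    using drop_eq_take_iff_has_period[of d w] period_d \<open>d \<le> q'\<close> \<open>q' < q\<close> \<open>2 * q \<le> n\<close>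
    by (simp add: n_def)
  have "has_period w (q - d)" using has_period_dvd[OF period_d] \<open>d dvd q\<close> by simp
  then have tail: "drop (n - d) w = take d (drop (n - q) w)"
    using \<open>d \<le> q'\<close> \<open>q' < q\<close> \<open>2 * q \<le> n\<close>
    by (intro nth_equalityI) (auto simp: has_period_def n_def ac_simps)
  have "qstar w d 2 = take (n + d) (qstar w q 2)"
    using qstar_2[of d w] qstar_2[of q w] shift_d shift_q tail \<open>d \<le> q'\<close> \<open>q' < q\<close> \<open>2 * q \<le> n\<close>
    by (simp add: n_def)
  also have "\<dots> \<in> L"
    using language_take_closed[OF L] valid \<open>2 \<le> n\<close> unfolding valid_step_def by simp
  finally show ?thesis
    using \<open>2 \<le> n\<close> \<open>0 < d\<close> \<open>d \<le> q'\<close> \<open>q' < q\<close> \<open>2 * q \<le> n\<close> shift_d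
    unfolding valid_step_def n_def by (simp add: d_def Suc_le_eq)
qed

lemma Least_dvd_if_gcd_closed:
  fixes P :: "nat \<Rightarrow> bool"
  assumes gcd_closed: "\<And>a b. P a \<Longrightarrow> P b \<Longrightarrow> a < b \<Longrightarrow> P (gcd b a)"
    and pos: "\<And>a. P a \<Longrightarrow> 0 < a" and "P q"
  shows "(LEAST a. P a) dvd q"
proof -
  define m where "m = (LEAST a. P a)"
  have "P m" "m \<le> q" unfolding m_def using \<open>P q\<close> by (auto intro: LeastI Least_le)
  show ?thesis
  proof (cases "m = q")
    case False
    then have "P (gcd q m)" using gcd_closed \<open>P m\<close> \<open>P q\<close> \<open>m \<le> q\<close> by simp
    then have "m \<le> gcd q m" unfolding m_def by (rule Least_le)
    moreover have "gcd q m \<le> m" using pos[OF \<open>P m\<close>] by (simp add: gcd_le2_nat)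
    ultimately have "gcd q m = m" by simp
    then show ?thesis by (metis gcd_dvd1 m_def)
  qed (simp add: m_def)
qed

theorem mainTheorem11:
  fixes A :: "'a set" and L :: "'a list set" and w :: "'a list"
  assumes "is_language A L" and "w \<in> L"
  shows "(\<forall>q q'. valid_step L w q' \<and> valid_step L w q \<and> q' < q
            \<longrightarrow> valid_step L w (gcd q q'))
       \<and> (\<forall>q. valid_step L w q \<longrightarrow> min_step L w dvd q)"
proof (intro conjI allI impI)
  fix q q'
  assume "valid_step L w q' \<and> valid_step L w q \<and> q' < q"
  then show "valid_step L w (gcd q q')" using valid_step_gcd[OF assms(1)] by blast
next
  fix q
  assume "valid_step L w q"
  then show "min_step L w dvd q"
    unfolding min_step_def
  proof (rule Least_dvd_if_gcd_closed[rotated 2])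
    show "valid_step L w (gcd b a)" if "valid_step L w a" "valid_step L w b" "a < b" for a b
      using valid_step_gcd[OF assms(1)] that .
    show "0 < a" if "valid_step L w a" for a
      using that unfolding valid_step_def by simp
  qed
qed

end
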